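(* In continuous time, suppose $\pi_0(1|B)\le\pi_0(1|A)$, and one of the following is applied at all times: the unconstrained policy UN, the AA1 policy, or the AA2 policy. Then $\pi_t(1|B)\le\pi_t(1|A)$ for all $t\ge0$ (the initial advantage is preserved).
   Context: Two groups $A,B$; $\neg j$ is the other group. Group $j$ has qualification profile $\pi_t(1|j)\in[0,1]$, $\pi_t(0|j)=1-\pi_t(1|j)$. Selection rates of a policy $\tau$: $\beta_t(v;j)=\tau(v;j)\pi_t(v|j)$. Dynamics: continuously differentiable $f_0,f_1:[0,1]^2\to[0,1]$; continuous time: $\frac{d}{dt}\pi_t(1|j)=\pi_t(1|j)\big(f_1(\beta_t(0;j),\beta_t(1;j))-1\big)+(1-\pi_t(1|j))f_0(\beta_t(0;j),\beta_t(1;j))$, with the policy at time $t$ determined by the current profiles. UN: $\tau(1;j)=1,\tau(0;j)=0$, selection rates $(0,\pi_t(1|j))$. Group $j$ is advantaged at $t$ if $\pi_t(1|j)\ge\pi_t(1|\neg j)$. AA1 w.r.t. advantaged $j$: selection rates $\beta_t(0;j)=\beta_t(0;\neg j)=0$, $\beta_t(1;j)=\beta_t(1;\neg j)=\pi_t(1|\neg j)$ (i.e. $\tau(1;j)=\pi_t(1|\neg j)/\pi_t(1|j)$, $\tau(1;\neg j)=1$, $\tau(0;\cdot)=0$). AA2 w.r.t. advantaged $j$: $\beta_t(0;j)=0$, $\beta_t(1;j)=\pi_t(1|j)$, $\beta_t(0;\neg j)=\pi_t(1|j)-\pi_t(1|\neg j)$, $\beta_t(1;\neg j)=\pi_t(1|\neg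 j)$ (i.e. $\tau(1;\cdot)=1$, $\tau(0;j)=0$, $\tau(0;\neg j)=(\pi_t(1|j)-\pi_t(1|\neg j))/(1-\pi_t(1|\neg j))$). "Applied at all times" means at each $t$ the policy is taken with respect to the group advantaged at time $t$. *)

theory Defs
  imports "HOL-Analysis.Analysis"
begin

datatype policy = Pol_UN | Pol_AA1 | Pol_AA2

definition unit_square :: "(real \<times> real) set" where
  "unit_square = {0..1} \<times> {0..1}"

definition C1_on_square :: "(real \<times> real \<Rightarrow> real) \<Rightarrow> bool" where
  "C1_on_square f \<longleftrightarrow>
     (\<exists>f' :: real \<times> real \<Rightarrow> (real \<times> real) \<Rightarrow>\<^sub>L real.
        (\<forall>z\<in>unit_square. (f has_derivative blinfun_apply (f' z)) (at z within unit_square))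
        \<and> continuous_on unit_square f')"

text \<open>Selection rates \<open>(\<beta>(0;j), \<beta>(1;j))\<close> of a group \<open>j\<close> with qualification profile
  \<open>x = \<pi>(1|j)\<close>, when the other group has profile \<open>y = \<pi>(1|\<not>j)\<close>; the policy is taken with
  respect to the currently advantaged group (group \<open>j\<close> is advantaged iff \<open>x \<ge> y\<close>;
  on ties both readings agree).\<close>
fun sel_rates :: "policy \<Rightarrow> real \<Rightarrow> real \<Rightarrow> real \<times> real" where
  "sel_rates Pol_UN x y = (0, x)"
| "sel_rates Pol_AA1 x y = (if y \<le> x then (0, y) else (0, x))"
| "sel_rates Pol_AA2 x y = (if y \<le> x then (0, x) else (y - x, x))"

definition drift :: "(real \<times> real \<Rightarrow> real) \<Rightarrow> (real \<times> real \<Rightarrow> real) \<Rightarrow> policy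
                      \<Rightarrow> real \<Rightarrow> real \<Rightarrow> real" where
  "drift f0 f1 pol x y =
     x * (f1 (sel_rates pol x y) - 1) + (1 - x) * f0 (sel_rates pol x y)"

end

theory Submission
  imports Defs
begin

text \<open>Write \<open>d = \<pi>(1|A) - \<pi>(1|B)\<close>. Under each of the three policies, swapping the two
  profiles changes the selection rates by at most \<open>2|d|\<close>; since \<open>f\<^sub>0, f\<^sub>1\<close> are \<open>C\<^sup>1\<close>, hence
  Lipschitz, on the compact square, \<open>d' = drift(\<pi>_A, \<pi>_B) - drift(\<pi>_B, \<pi>_A)\<close> satisfies
  \<open>|d'| \<le> K |d|\<close>. Then \<open>d e\<^sup>-\<^sup>K\<^sup>t\<close> is nondecreasing wherever it is nonpositive, so it cannot
  become negative after starting nonnegative.\<close>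

lemma nonneg_invariant_if_deriv_nonneg_at_nonpos:
  fixes w W :: "real \<Rightarrow> real"
  assumes deriv: "\<And>t. t \<ge> 0 \<Longrightarrow> (w has_real_derivative W t) (at t within {0..})"
    and barrier: "\<And>t. t \<ge> 0 \<Longrightarrow> w t \<le> 0 \<Longrightarrow> W t \<ge> 0"
    and init: "w 0 \<ge> 0"
    and t: "t \<ge> 0"
  shows "w t \<ge> 0"
proof (rule ccontr)
  assume neg: "\<not> w t \<ge> 0"
  have cont: "continuous_on {0..t} w"
    using DERIV_continuous_on[of "{0..}" w W] deriv continuous_on_subset by fastforce
  define S where "S = {u \<in> {0..t}. w u \<ge> 0}"
  have "closed S"
    using continuous_closed_preimage[OF cont closed_atLeastAtMost closed_atLeast, of 0]
    by (simp add: S_def vimage_def Int_def conj_commute)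
  moreover have "0 \<in> S" "bdd_above S"
    using init t by (auto simp: S_def)
  ultimately have "Sup S \<in> S"
    using closed_contains_Sup by blast
  \<comment> \<open>after the last time \<open>s\<close> where \<open>w \<ge> 0\<close>, \<open>w\<close> is negative, hence nondecreasing\<close>
  define s where "s = Sup S"
  have s: "0 \<le> s" "s \<le> t" "w s \<ge> 0"
    using \<open>Sup S \<in> S\<close> by (auto simp: S_def s_def)
  have after_s: "w u < 0" if "s < u" "u \<le> t" for u
    using that s cSup_upper[OF _ \<open>bdd_above S\<close>, of u] by (force simp: S_def s_def)
  have "w s \<le> w t"
  proof (rule DERIV_nonneg_imp_increasing_open[OF \<open>s \<le> t\<close>])
    fix u assume u: "s < u" "u < t"
    have "(w has_real_derivative W u) (at u within {0<..})"
      by (rule has_field_derivative_subset[OF deriv]) (use u s in auto)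
    then have "(w has_real_derivative W u) (at u)"
      using u s at_within_open[of u "{0<..}"] by simp
    moreover have "W u \<ge> 0"
      using u s after_s by (intro barrier) (auto intro: less_imp_le)
    ultimately show "\<exists>y. (w has_real_derivative y) (at u) \<and> 0 \<le> y" by blast
  qed (use cont s in \<open>auto intro: continuous_on_subset\<close>)
  then show False
    using s neg by simp
qed

lemma nonneg_invariant_if_deriv_linearly_bounded:
  fixes d D :: "real \<Rightarrow> real" and K :: real
  assumes deriv: "\<And>t. t \<ge> 0 \<Longrightarrow> (d has_real_derivative D t) (at t within {0..})"
    and bound: "\<And>t. t \<ge> 0 \<Longrightarrow> \<bar>D t\<bar> \<le> K * \<bar>d t\<bar>"
    and init: "d 0 \<ge> 0"
    and t: "t \<ge> 0"
  shows "d t \<ge> 0"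
proof -
  define w where "w = (\<lambda>t. d t * exp (- K * t))"
  define W where "W t = (D t - K * d t) * exp (- K * t)" for t
  have "w t \<ge> 0"
  proof (rule nonneg_invariant_if_deriv_nonneg_at_nonpos[where w = w and W = W])
    show "(w has_real_derivative W t) (at t within {0..})" if "t \<ge> 0" for t
      unfolding w_def W_def using deriv[OF that]
      by (auto intro!: derivative_eq_intros simp: algebra_simps)
  next
    fix t :: real assume "t \<ge> 0" "w t \<le> 0"
    then have "d t \<le> 0"
      by (simp add: w_def mult_le_0_iff)
    then have "D t - K * d t \<ge> 0"
      using bound[OF \<open>t \<ge> 0\<close>] by (simp add: abs_of_nonpos)
    then show "W t \<ge> 0"
      by (simp add: W_def)
  qed (use init t in \<open>simp_all add: w_def\<close>)
  then show ?thesis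
    by (simp add: w_def zero_le_mult_iff)
qed

lemma C1_on_square_imp_lipschitz:
  assumes "C1_on_square f"
  obtains L where "L-lipschitz_on unit_square f"
proof -
  obtain f' :: "real \<times> real \<Rightarrow> (real \<times> real) \<Rightarrow>\<^sub>L real" where
    deriv: "\<forall>z\<in>unit_square. (f has_derivative blinfun_apply (f' z)) (at z within unit_square)"
    and cont: "continuous_on unit_square f'"
    using assms unfolding C1_on_square_def by blast
  have "compact unit_square" "convex unit_square"
    by (auto simp: unit_square_def intro!: compact_Times convex_Times)
  then have "bounded (f' ` unit_square)"
    using cont compact_continuous_image compact_imp_bounded by blast
  then obtain B where B: "\<And>z. z \<in> unit_square \<Longrightarrow> norm (f' z) \<le> B"
    unfolding bounded_iff by blast
  show ?thesis
  proof (rule that, rule lipschitz_onI)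
    fix a b assume "a \<in> unit_square" "b \<in> unit_square"
    then have "norm (f a - f b) \<le> B * norm (a - b)"
      using differentiable_bound[OF \<open>convex unit_square\<close>, of f "\<lambda>z. blinfun_apply (f' z)"]
        deriv B by (auto simp: norm_blinfun.rep_eq[symmetric])
    also have "\<dots> \<le> max B 0 * norm (a - b)"
      by (intro mult_right_mono) auto
    finally show "dist (f a) (f b) \<le> max B 0 * dist a b"
      by (simp add: dist_norm)
  qed simp
qed

lemma sel_rates_in_unit_square:
  assumes "x \<in> {0..1}" "y \<in> {0..1}"
  shows "sel_rates pol x y \<in> unit_square"
  using assms by (cases pol) (auto simp: unit_square_def)

lemma dist_sel_rates_swap:
  "dist (sel_rates pol x y) (sel_rates pol y x) \<le> 2 * dist x y"
proof -
  have dist_le: "dist (a, b) (c, e) \<le> \<bar>a - c\<bar> + \<bar>b - e\<bar>" for a b c e :: real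
    using norm_Pair_le[of "a - c" "b - e"] by (simp add: dist_norm)
  show ?thesis
    by (cases pol) (auto intro!: order_trans[OF dist_le] simp: dist_real_def)
qed

lemma drift_swap_lipschitz:
  assumes f0: "L0-lipschitz_on unit_square f0" and f1: "L1-lipschitz_on unit_square f1"
    and f0_range: "\<forall>z\<in>unit_square. f0 z \<in> {0..1}"
    and f1_range: "\<forall>z\<in>unit_square. f1 z \<in> {0..1}"
    and x: "x \<in> {0..1}" and y: "y \<in> {0..1}"
  shows "\<bar>drift f0 f1 pol x y - drift f0 f1 pol y x\<bar> \<le> (2 + 2 * L0 + 2 * L1) * \<bar>x - y\<bar>"
proof -
  define a where "a = sel_rates pol x y"
  define b where "b = sel_rates pol y x"
  have ab: "a \<in> unit_square" "b \<in> unit_square"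
    using sel_rates_in_unit_square x y by (simp_all add: a_def b_def)
  have dist_ab: "dist a b \<le> 2 * \<bar>x - y\<bar>"
    using dist_sel_rates_swap by (simp add: a_def b_def dist_real_def)
  have "drift f0 f1 pol x y - drift f0 f1 pol y x =
      (x - y) * (f1 a - 1) + y * (f1 a - f1 b) + (y - x) * f0 a + (1 - y) * (f0 a - f0 b)"
    by (simp add: drift_def a_def b_def algebra_simps)
  moreover have "\<bar>(x - y) * (f1 a - 1)\<bar> \<le> \<bar>x - y\<bar>" "\<bar>(y - x) * f0 a\<bar> \<le> \<bar>x - y\<bar>"
    using f0_range f1_range ab by (auto simp: abs_mult abs_minus_commute intro!: mult_left_le)
  moreover have "\<bar>y * (f1 a - f1 b)\<bar> \<le> L1 * (2 * \<bar>x - y\<bar>)"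
    "\<bar>(1 - y) * (f0 a - f0 b)\<bar> \<le> L0 * (2 * \<bar>x - y\<bar>)"
  proof -
    have "\<bar>f1 a - f1 b\<bar> \<le> L1 * (2 * \<bar>x - y\<bar>)" "\<bar>f0 a - f0 b\<bar> \<le> L0 * (2 * \<bar>x - y\<bar>)"
      using lipschitz_onD[OF f1 ab] lipschitz_onD[OF f0 ab] dist_ab
        lipschitz_on_nonneg[OF f1] lipschitz_on_nonneg[OF f0]
      by (auto simp: dist_real_def intro: order_trans mult_left_mono)
    moreover have "\<bar>y * r\<bar> \<le> \<bar>r\<bar>" "\<bar>(1 - y) * r\<bar> \<le> \<bar>r\<bar>" for r
      using y by (auto simp: abs_mult intro!: mult_left_le_one_le)
    ultimately show "\<bar>y * (f1 a - f1 b)\<bar> \<le> L1 * (2 * \<bar>x - y\<bar>)"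
      "\<bar>(1 - y) * (f0 a - f0 b)\<bar> \<le> L0 * (2 * \<bar>x - y\<bar>)"
      by (meson order_trans)+
  qed
  ultimately show ?thesis
    by (simp add: algebra_simps) (smt (verit) abs_triangle_ineq)
qed

theorem mainTheorem7:
  fixes f0 f1 :: "real \<times> real \<Rightarrow> real"
    and pA pB :: "real \<Rightarrow> real"
    and pol :: policy
  assumes f0_C1: "C1_on_square f0"
    and f1_C1: "C1_on_square f1"
    and f0_range: "\<forall>z\<in>unit_square. f0 z \<in> {0..1}"
    and f1_range: "\<forall>z\<in>unit_square. f1 z \<in> {0..1}"
    and prof_range: "\<forall>t\<ge>0. pA t \<in> {0..1} \<and> pB t \<in> {0..1}"
    and dynA: "\<forall>t\<ge>0. (pA has_real_derivative drift f0 f1 pol (pA t) (pB t)) (at t within {0..})"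
    and dynB: "\<forall>t\<ge>0. (pB has_real_derivative drift f0 f1 pol (pB t) (pA t)) (at t within {0..})"
    and init: "pB 0 \<le> pA 0"
  shows "\<forall>t\<ge>0. pB t \<le> pA t"
proof (intro allI impI)
  fix t :: real assume "t \<ge> 0"
  obtain L0 L1 where "L0-lipschitz_on unit_square f0" "L1-lipschitz_on unit_square f1"
    using C1_on_square_imp_lipschitz f0_C1 f1_C1 by metis
  then have bound: "\<bar>drift f0 f1 pol (pA s) (pB s) - drift f0 f1 pol (pB s) (pA s)\<bar>
      \<le> (2 + 2 * L0 + 2 * L1) * \<bar>pA s - pB s\<bar>" if "s \<ge> 0" for s
    using drift_swap_lipschitz f0_range f1_range prof_range that by blast
  have "pA t - pB t \<ge> 0"
  proof (rule nonneg_invariant_if_deriv_linearly_bounded[OF _ bound])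
    show "((\<lambda>s. pA s - pB s) has_real_derivative
        drift f0 f1 pol (pA s) (pB s) - drift f0 f1 pol (pB s) (pA s)) (at s within {0..})"
      if "s \<ge> 0" for s
      using dynA dynB that by (auto intro!: derivative_eq_intros)
  qed (use init \<open>t \<ge> 0\<close> in auto)
  then show "pB t \<le> pA t" by simp
qed

end
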